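(* Let $\mathfrak{A}$ be a unital $C^*$-algebra, $\theta,\alpha\in\mathrm{Aut}(\mathfrak{A})$, $u\in\mathfrak{A}$ unitary with $u\,\alpha(\theta(a))=\theta(\alpha(a))u$ for all $a$, and suppose $(\mathfrak{A},\theta)$ is topologically ergodic. For $n\in\mathbb{Z}$ let $W_n:=\{a\in\mathfrak{A}\mid \alpha^{-n}(u_n)\theta(a)=a\}$. Then for each $n$, either $W_n=\{0\}$ or $W_n=\mathbb{C}w_n$ for some unitary $w_n\in\mathfrak{A}$.
   Context: The unitaries $u_n$ are defined by $u_0=I$, $u_n=u\alpha(u)\cdots\alpha^{n-1}(u)$ for $n\ge1$, $u_n=\alpha^{-1}(u^* )\alpha^{-2}(u^* )\cdots\alpha^{n}(u^* )$ for $n<0$. $(\mathfrak{A},\theta)$ topologically ergodic means $\{a\in\mathfrak{A}\mid\theta(a)=a\}=\mathbb{C}I$. *)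

theory Defs
  imports "HOL-Analysis.Analysis"
begin

text \<open>A unital C*-algebra is modelled on a type 'a that is a real unital Banach
algebra (norm 1 = 1), equipped with a complex scalar multiplication sc extending
the real one, and an involution st satisfying the C*-identity.\<close>

definition cstar_algebra ::
  "(complex \<Rightarrow> 'a::{real_normed_algebra_1,banach} \<Rightarrow> 'a) \<Rightarrow> ('a \<Rightarrow> 'a) \<Rightarrow> bool" where
  "cstar_algebra sc st \<longleftrightarrow>
     (\<forall>r x. sc (complex_of_real r) x = scaleR r x) \<and>
     (\<forall>a b x. sc (a + b) x = sc a x + sc b x) \<and>
     (\<forall>a x y. sc a (x + y) = sc a x + sc a y) \<and>
     (\<forall>a b x. sc (a * b) x = sc a (sc b x)) \<and>
     (\<forall>x. sc 1 x = x) \<and>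
     (\<forall>a x y. sc a (x * y) = sc a x * y) \<and>
     (\<forall>a x y. sc a (x * y) = x * sc a y) \<and>
     (\<forall>a x. norm (sc a x) = cmod a * norm x) \<and>
     (\<forall>x y. st (x + y) = st x + st y) \<and>
     (\<forall>a x. st (sc a x) = sc (cnj a) (st x)) \<and>
     (\<forall>x y. st (x * y) = st y * st x) \<and>
     (\<forall>x. st (st x) = x) \<and>
     (\<forall>x. norm (st x * x) = (norm x)\<^sup>2)"

definition is_aut ::
  "(complex \<Rightarrow> 'a::{real_normed_algebra_1,banach} \<Rightarrow> 'a) \<Rightarrow> ('a \<Rightarrow> 'a) \<Rightarrow> ('a \<Rightarrow> 'a) \<Rightarrow> bool" where
  "is_aut sc st f \<longleftrightarrow> bij f \<and>
     (\<forall>x y. f (x + y) = f x + f y) \<and>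
     (\<forall>c x. f (sc c x) = sc c (f x)) \<and>
     (\<forall>x y. f (x * y) = f x * f y) \<and>
     (\<forall>x. f (st x) = st (f x)) \<and>
     f 1 = 1"

definition unitary :: "('a::ring_1 \<Rightarrow> 'a) \<Rightarrow> 'a \<Rightarrow> bool" where
  "unitary st u \<longleftrightarrow> st u * u = 1 \<and> u * st u = 1"

definition apow :: "('a \<Rightarrow> 'a) \<Rightarrow> int \<Rightarrow> 'a \<Rightarrow> 'a" where
  "apow f k = (if 0 \<le> k then f ^^ nat k else inv f ^^ nat (- k))"

definition cocycle :: "('a::ring_1 \<Rightarrow> 'a) \<Rightarrow> ('a \<Rightarrow> 'a) \<Rightarrow> 'a \<Rightarrow> int \<Rightarrow> 'a" where
  "cocycle st \<alpha> u n =
     (if 0 \<le> n then prod_list (map (\<lambda>k. apow \<alpha> (int k) u) [0..<nat n])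
      else prod_list (map (\<lambda>k. apow \<alpha> (- int k) (st u)) [1..<nat (- n) + 1]))"

end

theory Submission
  imports Defs
begin

(* Let v = alpha^(-n)(u_n) and W = {a. v theta(a) = a}.  For a, b in W the product a* b is
   theta-fixed, hence a scalar by ergodicity; the cocycle identity
   theta(alpha^n z) = u_n alpha^n(theta z) u_n* shows that the image of a a* under alpha^n, and
   hence a a* itself, is a scalar too.  So a nonzero a in W satisfies a* a = a a* = c, and every
   b in W lies in C a because c b = a a* b.  It remains to see that c > 0, so that a / sqrt c is
   unitary.  Otherwise a rescaling x of a would satisfy x* x = x x* = -1; then x and its inverse
   -x* have norm 1 and the resolvent of x is bounded on the unit circle, contradicting the
   nonemptiness of the spectrum, which follows by comparing Neumann series of the resolvent
   inside and outside the circle, summed over roots of unity. *)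

definition neumann_series :: "'a::{real_normed_algebra_1,banach} \<Rightarrow> 'a" where
  "neumann_series y = (\<Sum>n. y ^ n)"

definition inverse_of :: "'a::monoid_mult \<Rightarrow> 'a \<Rightarrow> bool" where
  "inverse_of r x \<longleftrightarrow> x * r = 1 \<and> r * x = 1"

lemma right_inverse_eq_left_inverse:
  fixes y :: "'a::monoid_mult"
  assumes "y * z = 1" and "z' * y = 1"
  shows "z' = z"
  by (metis assms mult.assoc mult_1_left mult_1_right)

lemma inverse_of_unique: "inverse_of r x \<Longrightarrow> inverse_of r' x \<Longrightarrow> r = r'"
  unfolding inverse_of_def by (metis right_inverse_eq_left_inverse)

lemma inverse_of_factor:
  fixes y :: "'a::monoid_mult"
  assumes "y * P = k" and "P * y = k" and "inverse_of Q k"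
  shows "inverse_of (P * Q) y"
proof -
  have right: "y * (P * Q) = 1" and left: "(Q * P) * y = 1"
    using assms unfolding inverse_of_def by (simp_all flip: mult.assoc) (simp add: mult.assoc)
  then show ?thesis
    using right_inverse_eq_left_inverse[OF right left] unfolding inverse_of_def by simp
qed

lemma summable_power_norm_less_1:
  fixes y :: "'a::{real_normed_algebra_1,banach}"
  assumes "norm y < 1"
  shows "summable (\<lambda>n. y ^ n)"
proof -
  have "summable (\<lambda>n. norm y ^ n)" using assms by (intro summable_geometric) auto
  then have "summable (\<lambda>n. norm (y ^ n))"
    by (rule summable_norm_comparison_test[rotated]) (auto intro: norm_power_ineq)
  then show ?thesis by (rule summable_norm_cancel)
qed

lemma neumann_series_inverse:
  fixes y :: "'a::{real_normed_algebra_1,banach}"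
  assumes "norm y < 1"
  shows "inverse_of (neumann_series y) (1 - y)"
proof -
  have s: "summable (\<lambda>n. y ^ n)" by (rule summable_power_norm_less_1[OF assms])
  have "(\<lambda>n. norm y ^ n) \<longlonglongrightarrow> 0" using assms by (intro LIMSEQ_power_zero) auto
  then have "(\<lambda>n. y ^ n) \<longlonglongrightarrow> 0"
    by (rule Lim_null_comparison[rotated]) (simp add: norm_power_ineq)
  then have telescope: "(\<Sum>n. y ^ n - y ^ Suc n) = 1"
    using telescope_sums'[of "\<lambda>n. y ^ n"] by (simp add: sums_iff)
  have "(1 - y) * neumann_series y = (\<Sum>n. (1 - y) * y ^ n)"
    unfolding neumann_series_def by (rule suminf_mult[OF s, symmetric])
  also have "\<dots> = 1" using telescope by (simp add: algebra_simps)
  moreover have "neumann_series y * (1 - y) = (\<Sum>n. y ^ n * (1 - y))"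
    unfolding neumann_series_def by (rule suminf_mult2[OF s])
  moreover have "\<dots> = 1" using telescope by (simp add: algebra_simps power_commutes)
  ultimately show ?thesis unfolding inverse_of_def by simp
qed

lemma norm_neumann_series_le:
  fixes y :: "'a::{real_normed_algebra_1,banach}"
  assumes "norm y < 1"
  shows "norm (neumann_series y) \<le> 1 / (1 - norm y)"
proof -
  have "norm (neumann_series y) \<le> (\<Sum>n. norm y ^ n)" unfolding neumann_series_def
    by (rule norm_suminf_le[OF norm_power_ineq]) (use assms in \<open>auto intro: summable_geometric\<close>)
  also have "\<dots> = 1 / (1 - norm y)" using assms by (intro suminf_geometric) auto
  finally show ?thesis .
qed

lemma primitive_root_of_unity:
  assumes N: "0 < N"
  obtains \<omega> :: complex
  where "cmod \<omega> = 1" and "\<omega> ^ N = 1" and "\<And>m. 0 < m \<Longrightarrow> m < N \<Longrightarrow> \<omega> ^ m \<noteq> 1"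
proof
  let ?\<omega> = "cis (2 * pi / real N)"
  have power: "?\<omega> ^ m = cis (2 * pi * real m / real N)" for m
    by (simp add: Complex.DeMoivre mult.commute)
  show "cmod ?\<omega> = 1" by simp
  show "?\<omega> ^ N = 1" using N by (simp add: power)
  have "inj_on (\<lambda>k. cis (2 * pi * real k / real N)) {..<N}"
    using Complex.bij_betw_roots_unity[OF N] by (rule bij_betw_imp_inj_on)
  then have "m = 0" if "?\<omega> ^ m = 1" "m < N" for m
    using that N by (elim inj_onD[of _ _ m 0]) (simp_all add: power)
  then show "?\<omega> ^ m \<noteq> 1" if "0 < m" "m < N" for m
    using that by blast
qed

lemma sum_rotated_powers_eq_0:
  fixes \<omega> :: complex
  assumes \<omega>N: "\<omega> ^ N = 1" and primitive: "\<omega> ^ n \<noteq> 1"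
  shows "(\<Sum>k<N. (c * \<omega> ^ k) ^ n) = 0"
proof -
  have "(\<omega> ^ n) ^ N = 1" using \<omega>N by (metis mult.commute power_mult power_one)
  then have "(\<Sum>k<N. (\<omega> ^ n) ^ k) = 0" using primitive by (simp add: sum_gp_strict)
  moreover have "(\<Sum>k<N. (c * \<omega> ^ k) ^ n) = c ^ n * (\<Sum>k<N. (\<omega> ^ n) ^ k)"
    by (simp add: sum_distrib_left power_mult_distrib power_mult[symmetric] mult.commute)
  ultimately show ?thesis by simp
qed

lemma norm_sum_rotated_powers_le:
  fixes \<omega> :: complex
  assumes "cmod \<omega> = 1"
  shows "cmod (\<Sum>k<N. (c * \<omega> ^ k) ^ n) \<le> of_nat N * cmod c ^ n"
proof -
  have "cmod (\<Sum>k<N. (c * \<omega> ^ k) ^ n) \<le> (\<Sum>k<N. cmod ((c * \<omega> ^ k) ^ n))" by (rule norm_sum)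
  also have "\<dots> = of_nat N * cmod c ^ n" using assms by (simp add: norm_power norm_mult)
  finally show ?thesis .
qed

locale complex_banach_algebra =
  fixes sc :: "complex \<Rightarrow> 'a::{real_normed_algebra_1,banach} \<Rightarrow> 'a"
  assumes sc_of_real: "sc (complex_of_real r) x = scaleR r x"
    and sc_add_left: "sc (a + b) x = sc a x + sc b x"
    and sc_sc: "sc (a * b) x = sc a (sc b x)"
    and sc_one: "sc 1 x = x"
    and sc_mult_left: "sc a (x * y) = sc a x * y"
    and sc_mult_right: "sc a (x * y) = x * sc a y"
    and norm_sc: "norm (sc a x) = cmod a * norm x"
begin

definition scal :: "complex \<Rightarrow> 'a" where
  "scal c = sc c 1"

lemma sc_eq_scal_mult: "sc c x = scal c * x"
  unfolding scal_def by (metis sc_mult_left mult_1_left)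

lemma scal_commute: "scal c * x = x * scal c"
  unfolding scal_def by (metis sc_mult_left sc_mult_right mult_1_left mult_1_right)

lemma mult_scal_left_commute: "x * (scal c * y) = scal c * (x * y)"
  by (metis scal_commute mult.assoc)

lemma scal_add: "scal (a + b) = scal a + scal b"
  unfolding scal_def by (rule sc_add_left)

lemma scal_mult: "scal (a * b) = scal a * scal b"
  by (metis sc_sc sc_eq_scal_mult scal_def)

lemma scal_mult_assoc: "scal a * (scal b * y) = scal (a * b) * y"
  by (simp add: scal_mult mult.assoc)

lemma scal_one [simp]: "scal 1 = 1"
  unfolding scal_def by (rule sc_one)

lemma scal_of_real: "scal (complex_of_real r) = of_real r"
  unfolding scal_def by (subst sc_of_real) (simp add: of_real_def)

lemma scal_zero [simp]: "scal 0 = 0"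
  using scal_of_real[of 0] by simp

lemma scal_minus: "scal (- a) = - scal a"
  by (metis add_eq_0_iff2 scal_add scal_zero)

lemma scal_diff: "scal (a - b) = scal a - scal b"
  using scal_add[of a "- b"] scal_minus[of b] by simp

lemma norm_scal_mult [simp]: "norm (scal a * y) = cmod a * norm y"
  by (metis sc_eq_scal_mult norm_sc)

lemma norm_scal [simp]: "norm (scal a) = cmod a"
  using norm_scal_mult[of a 1] by simp

lemma scal_of_nat: "scal (of_nat n) = of_nat n"
  using scal_of_real[of "of_nat n"] by simp

lemma scal_sum: "scal (sum g A) = (\<Sum>i\<in>A. scal (g i))"
  by (induct A rule: infinite_finite_induct) (simp_all add: scal_add)

lemma scal_mult_power: "(scal a * w) ^ n = scal (a ^ n) * w ^ n"
proof (induct n)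
  case (Suc n)
  have "(scal a * w) ^ Suc n = scal a * (w * (scal (a ^ n) * w ^ n))"
    using Suc by (simp add: mult.assoc)
  also have "\<dots> = scal a * (scal (a ^ n) * (w * w ^ n))"
    by (subst mult_scal_left_commute) (rule refl)
  also have "\<dots> = scal (a ^ Suc n) * w ^ Suc n"
    by (simp add: scal_mult_assoc)
  finally show ?case .
qed simp

lemma scal_inj: "scal a = scal b \<Longrightarrow> a = b"
  using norm_scal[of "a - b"] scal_diff[of a b] by simp

lemmas scal_simps = scal_mult[symmetric] scal_mult_assoc scal_add[symmetric] scal_diff[symmetric]

lemma resolvent_identity:
  assumes "R * (a - scal l) = 1" and "(a - scal m) * R' = 1"
  shows "R - R' = scal (l - m) * (R * R')"
proof -
  have "R - R' = R * ((a - scal m) * R') - (R * (a - scal l)) * R'" using assms by simp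
  also have "\<dots> = R * (scal l - scal m) * R'" by (simp add: algebra_simps)
  also have "\<dots> = scal (l - m) * (R * R')"
    by (simp add: scal_diff[symmetric] scal_commute mult.assoc)
  finally show ?thesis .
qed

lemma resolvent_perturbation:
  assumes R: "inverse_of R (a - scal l)" and small: "cmod (m - l) * norm R \<le> 1/2"
  obtains R' where "inverse_of R' (a - scal m)" and "norm R' \<le> 2 * norm R"
proof
  define y where "y = scal (m - l) * R"
  have ny: "norm y \<le> 1/2" unfolding y_def using small by simp
  then have ny1: "norm y < 1" by simp
  have factor: "a - scal m = (a - scal l) * (1 - y)"
  proof -
    have "(a - scal l) * (1 - y) = (a - scal l) - scal (m - l) * ((a - scal l) * R)"
      unfolding y_def
      by (simp add: algebra_simps scal_simps scal_commute[of _ a, symmetric]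
          mult_scal_left_commute[of a])
    also have "\<dots> = a - scal m" using R by (simp add: inverse_of_def scal_diff)
    finally show ?thesis by simp
  qed
  show "inverse_of (neumann_series y * R) (a - scal m)"
    using neumann_series_inverse[OF ny1] R unfolding factor inverse_of_def
    by (metis mult.assoc mult_1_left mult_1_right)
  have "norm (neumann_series y * R) \<le> norm (neumann_series y) * norm R" by (rule norm_mult_ineq)
  also have "\<dots> \<le> (1 / (1 - norm y)) * norm R"
    by (intro mult_right_mono norm_neumann_series_le[OF ny1]) simp
  also have "\<dots> \<le> 2 * norm R" using ny by (intro mult_right_mono) (auto simp: field_simps)
  finally show "norm (neumann_series y * R) \<le> 2 * norm R" .
qed

lemma resolvent_in_unit_disc:
  assumes z: "inverse_of z x" and nz: "norm z \<le> 1" and l: "cmod l < 1"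
  shows "inverse_of (neumann_series (scal l * z) * z) (x - scal l)"
    and "scal l * (neumann_series (scal l * z) * z) = neumann_series (scal l * z) - 1"
proof -
  define y where "y = scal l * z"
  have "norm y \<le> cmod l" unfolding y_def using nz by (simp add: mult_left_le)
  then have ny: "norm y < 1" using l by simp
  have factor: "x - scal l = x * (1 - y)"
    unfolding y_def using z
    by (simp add: inverse_of_def algebra_simps scal_simps scal_commute[of _ x, symmetric]
        mult_scal_left_commute[of x])
  show "inverse_of (neumann_series (scal l * z) * z) (x - scal l)"
    using neumann_series_inverse[OF ny] z unfolding factor inverse_of_def y_def[symmetric]
    by (metis mult.assoc mult_1_left)
  have "scal l * (neumann_series y * z) = neumann_series y * y"
    unfolding y_def by (simp add: scal_commute mult.assoc)
  also have "\<dots> = neumann_series y - neumann_series y * (1 - y)" by (simp add: algebra_simps)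
  finally show "scal l * (neumann_series (scal l * z) * z) = neumann_series (scal l * z) - 1"
    using neumann_series_inverse[OF ny] by (simp add: inverse_of_def y_def)
qed

lemma resolvent_outside_unit_disc:
  assumes nx: "norm x \<le> 1" and l: "cmod l > 1"
  shows "inverse_of (- scal (1 / l) * neumann_series (scal (1 / l) * x)) (x - scal l)"
    and "scal l * (- scal (1 / l) * neumann_series (scal (1 / l) * x))
           = - neumann_series (scal (1 / l) * x)"
proof -
  define y where "y = scal (1 / l) * x"
  have l0: "l \<noteq> 0" using l by auto
  have "norm y \<le> cmod (1 / l)" unfolding y_def using nx by (simp add: mult_left_le)
  also have "\<dots> < 1" using l by (simp add: norm_divide divide_less_eq)
  finally have ny: "norm y < 1" .
  have ll: "scal l * scal (1 / l) = 1" "scal (1 / l) * scal l = 1"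
    using l0 by (simp_all flip: scal_mult)
  have factor: "x - scal l = - scal l * (1 - y)"
    unfolding y_def using l0 by (simp add: algebra_simps scal_simps)
  have "(x - scal l) * (- scal (1 / l) * neumann_series y)
      = (scal l * scal (1 / l)) * ((1 - y) * neumann_series y)"
    unfolding factor by (simp add: mult.assoc scal_commute[of "1/l"])
  moreover have "(- scal (1 / l) * neumann_series y) * (x - scal l)
      = (scal (1 / l) * scal l) * (neumann_series y * (1 - y))"
    unfolding factor by (simp add: mult.assoc) (metis scal_commute mult.assoc)
  ultimately have "inverse_of (- scal (1 / l) * neumann_series y) (x - scal l)"
    using ll neumann_series_inverse[OF ny] unfolding inverse_of_def by simp
  then show "inverse_of (- scal (1 / l) * neumann_series (scal (1 / l) * x)) (x - scal l)"
    by (simp only: y_def)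
  show "scal l * (- scal (1 / l) * neumann_series (scal (1 / l) * x))
          = - neumann_series (scal (1 / l) * x)"
    using ll by (simp add: mult.assoc[symmetric])
qed

text \<open>Averaging over the rotated points \<open>r \<omega>\<^sup>k\<close> kills every power of the Neumann series
  whose exponent is not a multiple of \<open>N\<close>; the remaining tail is of order \<open>r\<^sup>N\<close>.\<close>

lemma sum_neumann_series_roots_of_unity:
  assumes N: "0 < N" and \<omega>N: "\<omega> ^ N = 1" and primitive: "\<And>m. 0 < m \<Longrightarrow> m < N \<Longrightarrow> \<omega> ^ m \<noteq> 1"
    and \<omega>1: "cmod \<omega> = 1" and w: "norm w \<le> 1" and r: "0 \<le> r" "r < 1"
  shows "norm ((\<Sum>k<N. neumann_series (scal (of_real r * \<omega> ^ k) * w)) - of_nat N)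
           \<le> of_nat N * r ^ N / (1 - r)"
proof -
  define f where "f k n = (scal (of_real r * \<omega> ^ k) * w) ^ n" for k n
  define E where "E n = (\<Sum>k<N. (of_real r * \<omega> ^ k) ^ n)" for n
  define F where "F n = scal (E n) * w ^ n" for n
  have "norm (scal (of_real r * \<omega> ^ k) * w) \<le> r" for k
    using w r \<omega>1 by (simp add: norm_mult norm_power mult_left_le)
  then have f_summable: "summable (f k)" for k
    unfolding f_def using r by (intro summable_power_norm_less_1) (meson order_le_less_trans)
  have sum_f: "(\<Sum>k<N. f k n) = F n" for n
    unfolding f_def F_def E_def by (simp add: scal_mult_power scal_sum sum_distrib_right)
  have F_summable: "summable F"
    using summable_sum[of "{..<N}" f, OF f_summable] sum_f by simp
  have sum_eq: "(\<Sum>k<N. neumann_series (scal (of_real r * \<omega> ^ k) * w)) = suminf F"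
    unfolding neumann_series_def f_def[symmetric]
    using suminf_sum[of "{..<N}" f, OF f_summable] sum_f by simp
  have E_vanishes: "E n = 0" if "0 < n" "n < N" for n
    unfolding E_def using \<omega>N primitive[OF that] by (rule sum_rotated_powers_eq_0)
  have initial_segment: "(\<Sum>n<N. F n) = of_nat N"
  proof -
    have "(\<Sum>n<N. F n) = F 0 + (\<Sum>n\<in>{..<N} - {0}. F n)" using N by (subst sum.remove[of _ 0]) auto
    also have "(\<Sum>n\<in>{..<N} - {0}. F n) = 0" by (rule sum.neutral) (auto simp: F_def E_vanishes)
    also have "F 0 = of_nat N" unfolding F_def E_def by (simp add: scal_of_nat)
    finally show ?thesis by simp
  qed
  have norm_E: "cmod (E m) \<le> of_nat N * r ^ m" for m
    unfolding E_def using norm_sum_rotated_powers_le[OF \<omega>1, where c = "of_real r"] r by simp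
  have norm_F: "norm (F (n + N)) \<le> of_nat N * r ^ N * r ^ n" for n
  proof -
    have "norm (w ^ (n + N)) \<le> 1"
      using norm_power_ineq[of w "n + N"] power_le_one[OF norm_ge_zero w] by (meson order_trans)
    then have "norm (F (n + N)) \<le> (of_nat N * r ^ (n + N)) * 1"
      unfolding F_def norm_scal_mult using r by (intro mult_mono norm_E) auto
    then show ?thesis by (simp add: power_add mult_ac)
  qed
  have "summable (\<lambda>n. of_nat N * r ^ N * r ^ n)"
    using r by (intro summable_mult summable_geometric) auto
  then have "norm (\<Sum>n. F (n + N)) \<le> (\<Sum>n. of_nat N * r ^ N * r ^ n)"
    by (rule norm_suminf_le[OF norm_F])
  also have "\<dots> = of_nat N * r ^ N / (1 - r)" using r by (simp add: suminf_mult suminf_geometric)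
  finally show ?thesis
    using suminf_split_initial_segment[OF F_summable, of N] initial_segment sum_eq by simp
qed

lemma norm_scal_mult_resolvent_diff_le:
  assumes R: "inverse_of R (a - scal l)" and R': "inverse_of R' (a - scal l')"
  shows "norm (scal l * R - scal l' * R')
           \<le> cmod (l - l') * norm R + cmod l' * (cmod (l - l') * (norm R * norm R'))"
proof -
  have "R - R' = scal (l - l') * (R * R')"
    using R R' by (intro resolvent_identity[where a = a]) (simp_all add: inverse_of_def)
  moreover have "scal l * R - scal l' * R' = scal (l - l') * R + scal l' * (R - R')"
    by (simp add: algebra_simps scal_diff)
  ultimately have "scal l * R - scal l' * R'
      = scal (l - l') * R + scal l' * (scal (l - l') * (R * R'))"
    by simp
  also have "norm \<dots> \<le> cmod (l - l') * norm R + cmod l' * (cmod (l - l') * norm (R * R'))"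
    by (rule order_trans[OF norm_triangle_ineq]) simp
  also have "\<dots> \<le> cmod (l - l') * norm R + cmod l' * (cmod (l - l') * (norm R * norm R'))"
    by (intro add_left_mono mult_left_mono norm_mult_ineq) simp_all
  finally show ?thesis .
qed

lemma resolvent_bound_near_unit_circle:
  assumes bounded: "\<And>l. cmod l = 1 \<Longrightarrow> \<exists>R. inverse_of R (x - scal l) \<and> norm R \<le> M"
    and l0: "cmod l0 = 1" and l: "cmod (l - l0) * M \<le> 1/2"
  obtains R where "inverse_of R (x - scal l)" and "norm R \<le> 2 * M"
proof -
  obtain R0 where R0: "inverse_of R0 (x - scal l0)" "norm R0 \<le> M" using bounded[OF l0] by blast
  have "cmod (l - l0) * norm R0 \<le> cmod (l - l0) * M" using R0(2) by (simp add: mult_left_mono)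
  then have "cmod (l - l0) * norm R0 \<le> 1/2" using l by linarith
  then obtain R where "inverse_of R (x - scal l)" "norm R \<le> 2 * norm R0"
    using resolvent_perturbation[OF R0(1)] by blast
  then show ?thesis using that R0(2) by simp
qed

lemma resolvent_jump_across_unit_circle:
  assumes z: "inverse_of z x" and nx: "norm x \<le> 1" and nz: "norm z \<le> 1"
    and bounded: "\<And>l. cmod l = 1 \<Longrightarrow> \<exists>R. inverse_of R (x - scal l) \<and> norm R \<le> M"
    and l0: "cmod l0 = 1" and d: "0 < d" "d * (1 + M)\<^sup>2 \<le> 1/64"
  shows "norm (neumann_series (scal (of_real (1 - d) * l0) * z) - 1
           + neumann_series (scal (1 / (of_real (1 + d) * l0)) * x)) \<le> 1/4"
proof -
  define lam where "lam = of_real (1 - d) * l0"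
  define lam' where "lam' = of_real (1 + d) * l0"
  obtain R0 where "inverse_of R0 (x - scal l0)" "norm R0 \<le> M" using bounded[OF l0] by blast
  then have M: "0 \<le> M" using norm_ge_zero order_trans by blast
  have "d * (1 + M)\<^sup>2 = d + 2 * (d * M) + d * M * M" by (simp add: power2_eq_square algebra_simps)
  moreover have "0 \<le> d * M" "0 \<le> d * M * M" using d M by simp_all
  ultimately have dd: "d \<le> 1/64" "d * M \<le> 1/64" "d + 2 * (d * M) + d * M * M \<le> 1/64"
    using d by linarith+
  have "lam - l0 = of_real (- d) * l0" "lam' - l0 = of_real d * l0"
    "lam - lam' = of_real (- 2 * d) * l0"
    unfolding lam_def lam'_def by (simp_all add: algebra_simps)
  then have dist: "cmod (lam - l0) = d" "cmod (lam' - l0) = d" "cmod (lam - lam') = 2 * d"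
    using l0 d by (simp_all add: norm_mult)
  have "cmod lam = 1 - d" "cmod lam' = 1 + d"
    unfolding lam_def lam'_def using l0 d dd(1) by (simp_all only: norm_mult norm_of_real) simp_all
  then have in_disc: "cmod lam < 1" and out_disc: "1 < cmod lam'" and "cmod lam' \<le> 1 + d"
    using d by simp_all
  have near: "cmod (lam - l0) * M \<le> 1/2" "cmod (lam' - l0) * M \<le> 1/2"
    unfolding dist(1,2) using dd(2) by linarith+
  obtain R1 where R1: "inverse_of R1 (x - scal lam)" "norm R1 \<le> 2 * M"
    using resolvent_bound_near_unit_circle[OF bounded l0 near(1)] .
  obtain R2 where R2: "inverse_of R2 (x - scal lam')" "norm R2 \<le> 2 * M"
    using resolvent_bound_near_unit_circle[OF bounded l0 near(2)] .
  have "R1 = neumann_series (scal lam * z) * z"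
    by (rule inverse_of_unique[OF R1(1) resolvent_in_unit_disc(1)[OF z nz in_disc]])
  moreover have "R2 = - scal (1 / lam') * neumann_series (scal (1 / lam') * x)"
    by (rule inverse_of_unique[OF R2(1) resolvent_outside_unit_disc(1)[OF nx out_disc]])
  ultimately have "neumann_series (scal lam * z) - 1 + neumann_series (scal (1 / lam') * x)
      = scal lam * R1 - scal lam' * R2"
    using resolvent_in_unit_disc(2)[OF z nz in_disc] resolvent_outside_unit_disc(2)[OF nx out_disc]
    by simp
  also have "norm \<dots> \<le> 2 * d * norm R1 + cmod lam' * (2 * d * (norm R1 * norm R2))"
    using norm_scal_mult_resolvent_diff_le[OF R1(1) R2(1)] dist(3) by simp
  also have "\<dots> \<le> 2 * d * (2 * M) + (1 + d) * (2 * d * (2 * M * (2 * M)))"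
    using R1(2) R2(2) d M \<open>cmod lam' \<le> 1 + d\<close>
    by (intro add_mono mult_mono mult_left_mono) (simp_all add: mult_nonneg_nonneg)
  also have "\<dots> = 4 * (d * M) + 8 * (d * M * M) + 8 * (d * (d * M * M))"
    by (simp add: algebra_simps)
  also have "\<dots> \<le> 1/4"
  proof -
    have "d * (d * M * M) \<le> 1/64 * (d * M * M)" using dd(1) d M by (intro mult_right_mono) auto
    then show ?thesis using dd(3) d \<open>0 \<le> d * M\<close> \<open>0 \<le> d * M * M\<close> by linarith
  qed
  finally show ?thesis unfolding lam_def lam'_def .
qed

text \<open>A discretised Cauchy integral of the resolvent: summed over \<open>N\<close>-th roots of unity,
  \<open>\<lambda> (x - \<lambda>)\<^sup>-\<^sup>1\<close> is close to \<open>0\<close> just inside the unit circle and close to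
  \<open>-N\<close> just outside, whereas a resolvent bounded on the circle makes the two sums differ by
  at most \<open>N/4\<close>.\<close>

lemma sum_resolvent_jump_roots_of_unity:
  assumes z: "inverse_of z x" and nx: "norm x \<le> 1" and nz: "norm z \<le> 1"
    and bounded: "\<And>l. cmod l = 1 \<Longrightarrow> \<exists>R. inverse_of R (x - scal l) \<and> norm R \<le> M"
    and d: "0 < d" "d * (1 + M)\<^sup>2 \<le> 1/64"
    and N: "0 < N" and \<omega>N: "\<omega> ^ N = 1" and primitive: "\<And>m. 0 < m \<Longrightarrow> m < N \<Longrightarrow> \<omega> ^ m \<noteq> 1"
    and \<omega>1: "cmod \<omega> = 1"
  shows "real N \<le> real N / 4 + real N * (1 - d) ^ N / d
           + real N * (1 / (1 + d)) ^ N / (1 - 1 / (1 + d))"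
proof -
  obtain R where "inverse_of R (x - scal 1)" "norm R \<le> M" using bounded[of 1] by auto
  then have "0 \<le> M" using norm_ge_zero order_trans by blast
  then have "1 \<le> (1 + M)\<^sup>2" by (intro one_le_power) simp
  then have "d * 1 \<le> 1/64" using d by (meson mult_left_mono less_imp_le order_trans)
  define S where "S = (\<Sum>k<N. neumann_series (scal (of_real (1 - d) * \<omega> ^ k) * z))"
  define S' where "S' = (\<Sum>k<N. neumann_series (scal (of_real (1 / (1 + d)) * (1 / \<omega>) ^ k) * x))"
  have S: "norm (S - of_nat N) \<le> real N * (1 - d) ^ N / d"
    unfolding S_def using sum_neumann_series_roots_of_unity[OF N \<omega>N primitive \<omega>1 nz, of "1 - d"]
      d \<open>d * 1 \<le> 1/64\<close> by simp
  have S': "norm (S' - of_nat N) \<le> real N * (1 / (1 + d)) ^ N / (1 - 1 / (1 + d))"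
    unfolding S'_def
  proof (rule sum_neumann_series_roots_of_unity[OF N _ _ _ nx])
    show "(1 / \<omega>) ^ N = 1" using \<omega>N by (simp add: power_one_over)
    show "(1 / \<omega>) ^ m \<noteq> 1" if "0 < m" "m < N" for m
      using primitive[OF that] by (simp add: power_one_over)
    show "cmod (1 / \<omega>) = 1" using \<omega>1 by (simp add: norm_divide)
  qed (use d in simp_all)
  define X where "X k = neumann_series (scal (of_real (1 - d) * \<omega> ^ k) * z) - 1
      + neumann_series (scal (of_real (1 / (1 + d)) * (1 / \<omega>) ^ k) * x)" for k
  have X: "norm (X k) \<le> 1/4" for k
  proof -
    have "cmod (\<omega> ^ k) = 1" using \<omega>1 by (simp add: norm_power)
    moreover have "1 / (of_real (1 + d) * \<omega> ^ k) = of_real (1 / (1 + d)) * (1 / \<omega>) ^ k"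
      by (simp add: power_one_over)
    ultimately show ?thesis
      using resolvent_jump_across_unit_circle[OF z nx nz bounded _ d] unfolding X_def by metis
  qed
  have "(\<Sum>k<N. X k) = S - (\<Sum>k<N. 1) + S'"
    unfolding X_def S_def S'_def by (simp only: sum.distrib sum_subtractf)
  moreover have "(\<Sum>k<N. 1) = (of_nat N :: 'a)" by simp
  ultimately have "(of_nat N :: 'a) = (\<Sum>k<N. X k) - (S - of_nat N) - (S' - of_nat N)"
    by (simp only:) (simp add: algebra_simps)
  then have "real N = norm ((\<Sum>k<N. X k) - (S - of_nat N) - (S' - of_nat N))"
    by (metis norm_of_nat)
  also have "\<dots> \<le> norm (\<Sum>k<N. X k) + norm (S - of_nat N) + norm (S' - of_nat N)"
    by (intro order_trans[OF norm_triangle_ineq4] add_right_mono norm_triangle_ineq4)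
  also have "norm (\<Sum>k<N. X k) \<le> real N / 4"
    using sum_norm_le[of "{..<N}" X "\<lambda>_. 1/4"] X by simp
  finally show ?thesis using S S' by linarith
qed

lemma resolvent_unbounded_on_unit_circle:
  assumes z: "inverse_of z x" and nx: "norm x \<le> 1" and nz: "norm z \<le> 1"
  shows "\<exists>l. cmod l = 1 \<and> \<not> (\<exists>R. inverse_of R (x - scal l) \<and> norm R \<le> M)"
proof (rule ccontr)
  assume "\<not> ?thesis"
  then have bounded: "\<exists>R. inverse_of R (x - scal l) \<and> norm R \<le> M" if "cmod l = 1" for l
    using that by blast
  have M: "0 \<le> M" using bounded[of 1] norm_ge_zero order_trans by (metis norm_one)
  define d :: real where "d = 1 / (64 * (1 + M)\<^sup>2)"
  have d: "0 < d" "d * (1 + M)\<^sup>2 \<le> 1/64" unfolding d_def using M by simp_all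
  have "1 \<le> (1 + M)\<^sup>2" using M by (intro one_le_power) simp
  then have "d < 1" unfolding d_def by (simp add: divide_less_eq)
  have "eventually (\<lambda>N. 0 < N \<and> (1 - d) ^ N / d < 1/4
      \<and> (1 / (1 + d)) ^ N / (1 - 1 / (1 + d)) < 1/4) sequentially"
  proof (intro eventually_conj)
    show "eventually (\<lambda>N. (1 - d) ^ N / d < 1/4) sequentially"
      by (rule order_tendstoD(2)[OF tendsto_divide_zero[OF LIMSEQ_power_zero]])
        (use d \<open>d < 1\<close> in simp_all)
    show "eventually (\<lambda>N. (1 / (1 + d)) ^ N / (1 - 1 / (1 + d)) < 1/4) sequentially"
      by (rule order_tendstoD(2)[OF tendsto_divide_zero[OF LIMSEQ_power_zero]])
        (use d in simp_all)
  qed (rule eventually_gt_at_top)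
  then obtain N where N: "0 < N" and small: "(1 - d) ^ N / d < 1/4"
    "(1 / (1 + d)) ^ N / (1 - 1 / (1 + d)) < 1/4"
    using eventually_sequentially by auto
  obtain \<omega> where "cmod \<omega> = 1" and "\<omega> ^ N = 1" and "\<And>m. 0 < m \<Longrightarrow> m < N \<Longrightarrow> \<omega> ^ m \<noteq> 1"
    using primitive_root_of_unity[OF N] by blast
  then have "real N \<le> real N / 4 + real N * ((1 - d) ^ N / d)
      + real N * ((1 / (1 + d)) ^ N / (1 - 1 / (1 + d)))"
    using sum_resolvent_jump_roots_of_unity[OF z nx nz bounded d N] by simp
  moreover have "real N * ((1 - d) ^ N / d) < real N * (1/4)"
    by (rule mult_strict_left_mono[OF small(1)]) (use N in simp)
  moreover have "real N * ((1 / (1 + d)) ^ N / (1 - 1 / (1 + d))) < real N * (1/4)"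
    by (rule mult_strict_left_mono[OF small(2)]) (use N in simp)
  ultimately show False using N by linarith
qed

end

locale cstar = complex_banach_algebra sc
  for sc :: "complex \<Rightarrow> 'a::{real_normed_algebra_1,banach} \<Rightarrow> 'a" +
  fixes st :: "'a \<Rightarrow> 'a"
  assumes star_add: "st (x + y) = st x + st y"
    and star_sc: "st (sc a x) = sc (cnj a) (st x)"
    and star_mult: "st (x * y) = st y * st x"
    and star_star [simp]: "st (st x) = x"
    and norm_star_mult_self: "norm (st x * x) = (norm x)\<^sup>2"

lemma cstar_algebra_imp_cstar: "cstar_algebra sc st \<Longrightarrow> cstar sc st"
  unfolding cstar_algebra_def cstar_def cstar_axioms_def complex_banach_algebra_def by auto

context cstar
begin

lemma star_zero [simp]: "st 0 = 0"
  using star_add[of 0 0] by simp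

lemma star_minus: "st (- x) = - st x"
  by (metis add_eq_0_iff2 star_add star_zero)

lemma star_diff: "st (x - y) = st x - st y"
  using star_add[of x "- y"] star_minus[of y] by simp

lemma star_one [simp]: "st 1 = 1"
  by (metis mult_1_left mult_1_right star_mult star_star)

lemma star_scal: "st (scal a) = scal (cnj a)"
  unfolding scal_def by (simp add: star_sc)

lemma star_scal_mult: "st (scal a * x) = scal (cnj a) * st x"
  by (simp add: star_mult star_scal scal_commute)

lemma norm_star: "norm (st x) = norm x"
proof -
  have le: "norm y \<le> norm (st y)" for y
  proof (cases "y = 0")
    case False
    have "(norm y)\<^sup>2 \<le> norm (st y) * norm y"
      using norm_star_mult_self[of y] norm_mult_ineq[of "st y" y] by simp
    then show ?thesis using False by (simp add: power2_eq_square)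
  qed simp
  show ?thesis using le[of x] le[of "st x"] by simp
qed

lemma norm_eq_1_if_star_mult_self_eq_minus_1:
  assumes "st x * x = -1"
  shows "norm x = 1"
proof -
  have "(norm x)\<^sup>2 = 1" using norm_star_mult_self[of x] assms by simp
  then show ?thesis using norm_ge_zero[of x] by (auto simp: power2_eq_1_iff)
qed

text \<open>The C*-identity gives \<open>\<parallel>k + i\<parallel>\<^sup>2 = \<parallel>k\<^sup>2 + 1\<parallel> \<le> 5\<close>, so
  \<open>k - 2i = -3i (1 - (k + i) / 3i)\<close> is inverted by a Neumann series.\<close>

lemma self_adjoint_minus_2i_inverse:
  assumes k: "st k = k" and nk: "norm k \<le> 2"
  shows "\<exists>Q. inverse_of Q (k - scal (2 * \<i>)) \<and> norm Q \<le> 4/3"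
proof -
  define B where "B = k + scal \<i>"
  have "st B * B = (k - scal \<i>) * (k + scal \<i>)"
    unfolding B_def using k by (simp add: star_add star_scal scal_minus)
  also have "\<dots> = k * k - scal (\<i> * \<i>)"
    by (simp add: algebra_simps scal_simps scal_commute[of _ k, symmetric]
        mult_scal_left_commute[of k])
  finally have "(norm B)\<^sup>2 = norm (k * k + 1)"
    using norm_star_mult_self[of B] by (simp add: scal_minus)
  also have "\<dots> \<le> norm k * norm k + 1"
    by (rule order_trans[OF norm_triangle_ineq]) (simp add: norm_mult_ineq)
  also have "\<dots> \<le> (9/4)\<^sup>2"
    using nk norm_ge_zero[of k] mult_mono[of "norm k" 2 "norm k" 2] by (simp add: power2_eq_square)
  finally have nB: "norm B \<le> 9/4" by (rule power2_le_imp_le) simp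
  define y where "y = scal (- \<i> / 3) * B"
  have ny: "norm y \<le> 3/4" using nB unfolding y_def by (simp add: norm_mult)
  then have ny1: "norm y < 1" by simp
  have factor: "k - scal (2 * \<i>) = - scal (3 * \<i>) * (1 - y)"
  proof -
    have "- scal (3 * \<i>) * (1 - y) = - scal (3 * \<i>) + scal (3 * \<i> * (- \<i> / 3)) * B"
      unfolding y_def by (simp add: algebra_simps scal_simps)
    also have "\<dots> = k - scal (2 * \<i>)" unfolding B_def
      by (simp add: algebra_simps scal_diff[symmetric] scal_add[symmetric])
    finally show ?thesis by simp
  qed
  define Q where "Q = scal (\<i> / 3) * neumann_series y"
  have "inverse_of Q (k - scal (2 * \<i>))"
  proof -
    have "(k - scal (2 * \<i>)) * Q = - scal (3 * \<i> * (\<i> / 3)) * ((1 - y) * neumann_series y)"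
      unfolding factor Q_def
      by (simp add: algebra_simps scal_simps scal_commute[of _ y, symmetric]
          mult_scal_left_commute[of y])
    moreover have "Q * (k - scal (2 * \<i>)) = - scal (\<i> / 3 * (3 * \<i>)) * (neumann_series y * (1 - y))"
      unfolding factor Q_def
      by (simp add: algebra_simps scal_simps scal_commute[of _ "neumann_series y", symmetric]
          mult_scal_left_commute[of "neumann_series y"])
    ultimately show ?thesis
      using neumann_series_inverse[OF ny1] unfolding inverse_of_def by (simp add: scal_minus)
  qed
  moreover have "norm Q \<le> 4/3"
  proof -
    have "norm Q = 1/3 * norm (neumann_series y)" unfolding Q_def by (simp add: norm_divide)
    also have "\<dots> \<le> 1/3 * (1 / (1 - norm y))"
      by (intro mult_left_mono norm_neumann_series_le[OF ny1]) simp
    also have "\<dots> \<le> 1/3 * 4" using ny by (intro mult_left_mono) (auto simp: field_simps)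
    finally show ?thesis by simp
  qed
  ultimately show ?thesis by blast
qed

text \<open>For \<open>x\<^sup>* = -x\<^sup>-\<^sup>1\<close> and \<open>|\<lambda>| = 1\<close>, multiplying \<open>x - \<lambda>\<close>
  by \<open>i \<lambda>\<^sup>* + i x\<^sup>*\<close> on either side gives \<open>k - 2i\<close>, where
  \<open>k = i \<lambda>\<^sup>* x - i \<lambda> x\<^sup>*\<close> is self-adjoint of norm at most \<open>2\<close>.\<close>

lemma resolvent_factor_of_star_eq_minus_inverse:
  assumes h1: "st x * x = -1" and h2: "x * st x = -1" and l: "l * cnj l = 1"
  shows "(x - scal l) * (scal (\<i> * cnj l) + scal \<i> * st x)
           = scal (\<i> * cnj l) * x - scal (\<i> * l) * st x - scal (2 * \<i>)"
    and "(scal (\<i> * cnj l) + scal \<i> * st x) * (x - scal l)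
           = scal (\<i> * cnj l) * x - scal (\<i> * l) * st x - scal (2 * \<i>)"
proof -
  note move_scal = mult_scal_left_commute[of x] mult_scal_left_commute[of "st x"]
    scal_commute[of _ x, symmetric] scal_commute[of _ "st x", symmetric]
  have "(x - scal l) * (scal (\<i> * cnj l) + scal \<i> * st x) = scal (\<i> * cnj l) * x
      + scal \<i> * (x * st x) - scal (l * (\<i> * cnj l)) - scal (l * \<i>) * st x"
    by (simp add: algebra_simps scal_simps move_scal)
  then show "(x - scal l) * (scal (\<i> * cnj l) + scal \<i> * st x)
      = scal (\<i> * cnj l) * x - scal (\<i> * l) * st x - scal (2 * \<i>)"
    unfolding h2 by (simp add: algebra_simps scal_simps l scal_minus move_scal)
  have "(scal (\<i> * cnj l) + scal \<i> * st x) * (x - scal l) = scal (\<i> * cnj l) * x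
      + scal \<i> * (st x * x) - scal (l * (\<i> * cnj l)) - scal (l * \<i>) * st x"
    by (simp add: algebra_simps scal_simps move_scal)
  then show "(scal (\<i> * cnj l) + scal \<i> * st x) * (x - scal l)
      = scal (\<i> * cnj l) * x - scal (\<i> * l) * st x - scal (2 * \<i>)"
    unfolding h1 by (simp add: algebra_simps scal_simps l scal_minus move_scal)
qed

lemma resolvent_bound_on_unit_circle:
  assumes h1: "st x * x = -1" and h2: "x * st x = -1" and l: "cmod l = 1"
  shows "\<exists>R. inverse_of R (x - scal l) \<and> norm R \<le> 8/3"
proof -
  have nx: "norm x = 1" by (rule norm_eq_1_if_star_mult_self_eq_minus_1[OF h1])
  have nsx: "norm (st x) = 1" using nx norm_star by simp
  define k where "k = scal (\<i> * cnj l) * x - scal (\<i> * l) * st x"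
  define P where "P = scal (\<i> * cnj l) + scal \<i> * st x"
  have "st k = k"
    unfolding k_def by (simp add: star_diff star_scal_mult scal_minus algebra_simps)
  moreover have "norm k \<le> 2"
  proof -
    have "norm k \<le> norm (scal (\<i> * cnj l) * x) + norm (scal (\<i> * l) * st x)"
      unfolding k_def by (rule norm_triangle_ineq4)
    also have "\<dots> = 2" using l nx nsx by (simp add: norm_mult)
    finally show ?thesis .
  qed
  ultimately obtain Q where Q: "inverse_of Q (k - scal (2 * \<i>))" "norm Q \<le> 4/3"
    using self_adjoint_minus_2i_inverse by blast
  have "l * cnj l = 1" using l by (simp add: complex_norm_square[symmetric])
  then have "inverse_of (P * Q) (x - scal l)"
    using resolvent_factor_of_star_eq_minus_inverse[OF h1 h2] Q(1) unfolding P_def k_def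
    by (intro inverse_of_factor) simp_all
  moreover have "norm P \<le> 2"
  proof -
    have "norm P \<le> norm (scal (\<i> * cnj l)) + norm (scal \<i> * st x)"
      unfolding P_def by (rule norm_triangle_ineq)
    also have "\<dots> = 2" using l nsx by (simp add: norm_mult)
    finally show ?thesis .
  qed
  then have "norm (P * Q) \<le> 8/3"
    using Q(2) norm_mult_ineq[of P Q] mult_mono[of "norm P" 2 "norm Q" "4/3"] by simp
  ultimately show ?thesis by blast
qed

lemma star_mult_self_neq_minus_one: "\<not> (st x * x = -1 \<and> x * st x = -1)"
proof
  assume h: "st x * x = -1 \<and> x * st x = -1"
  then have "inverse_of (- st x) x" by (simp add: inverse_of_def)
  moreover have "norm x = 1" "norm (- st x) = 1"
    using norm_eq_1_if_star_mult_self_eq_minus_1 h norm_star by auto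
  ultimately obtain l where "cmod l = 1" "\<not> (\<exists>R. inverse_of R (x - scal l) \<and> norm R \<le> 8/3)"
    using resolvent_unbounded_on_unit_circle by (metis order_refl)
  then show False using resolvent_bound_on_unit_circle h by blast
qed

end

lemma is_autD:
  assumes "is_aut sc st f"
  shows "bij f" and "f (x + y) = f x + f y" and "f (sc c x) = sc c (f x)"
    and "f (x * y) = f x * f y" and "f (st x) = st (f x)" and "f 1 = 1"
  using assms unfolding is_aut_def by auto

lemma is_aut_inv:
  assumes f: "is_aut sc st f"
  shows "is_aut sc st (inv f)"
proof -
  have "bij f" by (rule is_autD(1)[OF f])
  then have f_inv: "f (inv f y) = y" and inv_f: "inv f (f y) = y" for y
    by (simp_all add: bij_is_surj surj_f_inv_f bij_is_inj)
  show ?thesis unfolding is_aut_def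
  proof (intro conjI allI)
    show "bij (inv f)" using \<open>bij f\<close> by (rule bij_imp_bij_inv)
    show "inv f (x + y) = inv f x + inv f y" for x y by (metis is_autD(2)[OF f] f_inv inv_f)
    show "inv f (sc c x) = sc c (inv f x)" for c x by (metis is_autD(3)[OF f] f_inv inv_f)
    show "inv f (x * y) = inv f x * inv f y" for x y by (metis is_autD(4)[OF f] f_inv inv_f)
    show "inv f (st x) = st (inv f x)" for x by (metis is_autD(5)[OF f] f_inv inv_f)
    show "inv f 1 = 1" by (metis is_autD(6)[OF f] inv_f)
  qed
qed

lemma is_aut_comp: "is_aut sc st f \<Longrightarrow> is_aut sc st g \<Longrightarrow> is_aut sc st (f \<circ> g)"
  unfolding is_aut_def by (auto intro: bij_comp)

lemma is_aut_funpow: "is_aut sc st f \<Longrightarrow> is_aut sc st (f ^^ k)"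
proof (induct k)
  case 0
  show ?case by (simp add: is_aut_def bij_id[unfolded id_def])
qed (simp add: is_aut_comp)

lemma is_aut_apow: "is_aut sc st f \<Longrightarrow> is_aut sc st (apow f k)"
  unfolding apow_def by (simp add: is_aut_funpow is_aut_inv)

lemma is_aut_prod_list: "is_aut sc st f \<Longrightarrow> f (prod_list xs) = prod_list (map f xs)"
  by (induct xs) (simp_all add: is_autD)

lemma apow_of_nat: "apow f (int k) = f ^^ k"
  unfolding apow_def by simp

lemma apow_minus_of_nat: "apow f (- int k) = inv f ^^ k"
  unfolding apow_def by (cases "k = 0") simp_all

lemma apow_apow_minus:
  assumes "bij f"
  shows "apow f n (apow f (- n) x) = x" and "apow f (- n) (apow f n x) = x"
proof -
  have inverse: "apow f (int k) (apow f (- int k) x) = x"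
    "apow f (- int k) (apow f (int k) x) = x" for k x
    unfolding apow_of_nat apow_minus_of_nat
    using fn_o_inv_fn_is_id[OF assms, of k] inv_fn_o_fn_is_id[OF assms, of k]
    by (simp_all add: fun_eq_iff)
  show "apow f n (apow f (- n) x) = x" by (cases n rule: int_cases2) (simp_all add: inverse)
  show "apow f (- n) (apow f n x) = x" by (cases n rule: int_cases2) (simp_all add: inverse)
qed

lemma is_aut_zero: "is_aut sc st f \<Longrightarrow> f 0 = 0"
  using is_autD(2)[of sc st f 0 0] by simp

lemma cocycle_of_nat: "cocycle st \<alpha> u (int m) = prod_list (map (\<lambda>k. (\<alpha> ^^ k) u) [0..<m])"
  unfolding cocycle_def by (simp add: apow_of_nat)

lemma cocycle_Suc:
  assumes "is_aut sc st \<alpha>"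
  shows "cocycle st \<alpha> u (int (Suc m)) = u * \<alpha> (cocycle st \<alpha> u (int m))"
proof -
  have "[0..<Suc m] = 0 # map Suc [0..<m]" by (simp add: upt_conv_Cons map_Suc_upt)
  then show ?thesis
    unfolding cocycle_of_nat is_aut_prod_list[OF assms] by (simp add: comp_def)
qed

context cstar
begin

lemma unitary_one: "unitary st 1"
  unfolding unitary_def by simp

lemma unitary_mult: "unitary st a \<Longrightarrow> unitary st b \<Longrightarrow> unitary st (a * b)"
  unfolding unitary_def by (simp add: star_mult) (metis mult.assoc mult_1_left)

lemma unitary_star: "unitary st a \<Longrightarrow> unitary st (st a)"
  unfolding unitary_def by simp

lemma unitary_prod_list: "(\<And>x. x \<in> set xs \<Longrightarrow> unitary st x) \<Longrightarrow> unitary st (prod_list xs)"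
  by (induct xs) (simp_all add: unitary_one unitary_mult)

lemma unitary_is_aut: "unitary st v \<Longrightarrow> is_aut sc st f \<Longrightarrow> unitary st (f v)"
  unfolding unitary_def by (metis is_autD(4,5,6))

lemma is_aut_scal: "is_aut sc st f \<Longrightarrow> f (scal c) = scal c"
  unfolding scal_def by (metis is_autD(3,6))

lemma cocycle_minus:
  assumes \<alpha>: "is_aut sc st \<alpha>"
  shows "cocycle st \<alpha> u (- int m) = (inv \<alpha> ^^ m) (st (cocycle st \<alpha> u (int m)))"
proof -
  define d where "d m = prod_list (map (\<lambda>k. (inv \<alpha> ^^ k) (st u)) [1..<m+1])" for m
  have "d m = (inv \<alpha> ^^ m) (st (cocycle st \<alpha> u (int m)))" for m
  proof (induct m)
    case 0
    show ?case by (simp add: d_def cocycle_def)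
  next
    case (Suc m)
    let ?c = "cocycle st \<alpha> u (int m)"
    have "(inv \<alpha> ^^ Suc m) (\<alpha> (st ?c)) = (inv \<alpha> ^^ m) (inv \<alpha> (\<alpha> (st ?c)))"
      by (simp only: funpow_Suc_right comp_apply)
    then have "(inv \<alpha> ^^ m) (st ?c) = (inv \<alpha> ^^ Suc m) (\<alpha> (st ?c))"
      using is_autD(1)[OF \<alpha>] by (simp add: bij_is_inj)
    then have "d (Suc m) = (inv \<alpha> ^^ Suc m) (\<alpha> (st ?c)) * (inv \<alpha> ^^ Suc m) (st u)"
      using Suc by (simp add: d_def)
    also have "\<dots> = (inv \<alpha> ^^ Suc m) (\<alpha> (st ?c) * st u)"
      by (rule is_autD(4)[OF is_aut_funpow[OF is_aut_inv[OF \<alpha>]], symmetric])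
    also have "\<alpha> (st ?c) * st u = st (cocycle st \<alpha> u (int (Suc m)))"
      by (simp only: cocycle_Suc[OF \<alpha>] star_mult is_autD(5)[OF \<alpha>])
    finally show ?case .
  qed
  moreover have "cocycle st \<alpha> u (- int m) = d m" if "0 < m"
    unfolding cocycle_def d_def using that by (simp add: apow_minus_of_nat)
  ultimately show ?thesis
    by (cases "m = 0") (simp_all add: cocycle_def)
qed

lemma unitary_cocycle:
  assumes \<alpha>: "is_aut sc st \<alpha>" and u: "unitary st u"
  shows "unitary st (cocycle st \<alpha> u n)"
proof -
  have unitary_nonneg: "unitary st (cocycle st \<alpha> u (int m))" for m
    unfolding cocycle_of_nat
    by (rule unitary_prod_list) (auto intro: unitary_is_aut[OF u] is_aut_funpow[OF \<alpha>])
  show ?thesis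
  proof (cases n rule: int_cases2)
    case (nonneg m)
    then show ?thesis using unitary_nonneg by simp
  next
    case (nonpos m)
    have "unitary st ((inv \<alpha> ^^ m) (st (cocycle st \<alpha> u (int m))))"
      by (intro unitary_is_aut[OF unitary_star[OF unitary_nonneg]] is_aut_funpow is_aut_inv \<alpha>)
    then show ?thesis by (simp add: nonpos cocycle_minus[OF \<alpha>])
  qed
qed

lemma cocycle_conj_of_nat:
  assumes \<alpha>: "is_aut sc st \<alpha>" and u: "unitary st u"
    and twist: "\<forall>a. u * \<alpha> (\<theta> a) = \<theta> (\<alpha> a) * u"
  shows "\<theta> ((\<alpha> ^^ m) z) = cocycle st \<alpha> u (int m) * (\<alpha> ^^ m) (\<theta> z) * st (cocycle st \<alpha> u (int m))"
proof (induct m)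
  case 0
  show ?case by (simp add: cocycle_def)
next
  case (Suc m)
  let ?c = "cocycle st \<alpha> u (int m)"
  have step: "\<theta> (\<alpha> a) = u * \<alpha> (\<theta> a) * st u" for a
    using twist u unfolding unitary_def by (metis mult.assoc mult_1_right)
  have "\<theta> ((\<alpha> ^^ Suc m) z) = u * \<alpha> (?c * (\<alpha> ^^ m) (\<theta> z) * st ?c) * st u"
    using Suc by (simp add: step)
  also have "\<dots> = (u * \<alpha> ?c) * (\<alpha> ^^ Suc m) (\<theta> z) * st (u * \<alpha> ?c)"
    by (simp add: is_autD(4,5)[OF \<alpha>] star_mult mult.assoc)
  finally show ?case by (simp only: cocycle_Suc[OF \<alpha>])
qed

lemma cocycle_conj:
  assumes \<alpha>: "is_aut sc st \<alpha>" and u: "unitary st u"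
    and twist: "\<forall>a. u * \<alpha> (\<theta> a) = \<theta> (\<alpha> a) * u"
  shows "\<theta> (apow \<alpha> n z) = cocycle st \<alpha> u n * apow \<alpha> n (\<theta> z) * st (cocycle st \<alpha> u n)"
proof (cases n rule: int_cases2)
  case (nonneg m)
  then show ?thesis using cocycle_conj_of_nat[OF \<alpha> u twist] by (simp add: apow_of_nat)
next
  case (nonpos m)
  let ?c = "cocycle st \<alpha> u (int m)" and ?A = "\<alpha> ^^ m" and ?B = "inv \<alpha> ^^ m"
  have AB: "?A (?B y) = y" and BA: "?B (?A y) = y" for y
    using fn_o_inv_fn_is_id[OF is_autD(1)[OF \<alpha>], of m] inv_fn_o_fn_is_id[OF is_autD(1)[OF \<alpha>], of m]
    by (simp_all add: fun_eq_iff)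
  have B: "is_aut sc st ?B" by (rule is_aut_funpow[OF is_aut_inv[OF \<alpha>]])
  have "\<theta> z = ?c * ?A (\<theta> (?B z)) * st ?c"
    using cocycle_conj_of_nat[OF \<alpha> u twist, of m "?B z"] AB by simp
  then have "st ?c * \<theta> z * ?c = ?A (\<theta> (?B z))"
    using unitary_cocycle[OF \<alpha> u, of "int m"] unfolding unitary_def
    by (simp add: mult.assoc) (simp flip: mult.assoc)
  then have "\<theta> (?B z) = ?B (st ?c) * ?B (\<theta> z) * ?B ?c"
    using BA by (metis is_autD(4)[OF B])
  moreover have "?B ?c = st (?B (st ?c))" by (simp add: is_autD(5)[OF B])
  ultimately show ?thesis
    by (simp add: nonpos apow_minus_of_nat cocycle_minus[OF \<alpha>])
qed

lemma star_scal_mult_self: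
  shows "st (scal b * a) * (scal b * a) = scal (cnj b * b) * (st a * a)"
    and "(scal b * a) * st (scal b * a) = scal (b * cnj b) * (a * st a)"
  by (simp_all add: star_scal_mult mult.assoc mult_scal_left_commute[of "st a"]
      mult_scal_left_commute[of a] scal_mult_assoc)

lemma scalar_normal_coeff:
  assumes a: "a \<noteq> 0" and c: "st a * a = scal c" and c': "a * st a = scal c'"
  shows "c' = c" and "c \<in> \<real>" and "0 < Re c"
proof -
  have "st a \<noteq> 0" using a by (metis star_star star_zero)
  show "c' = c"
  proof (rule ccontr)
    assume "c' \<noteq> c"
    have "scal c * st a = st a * (a * st a)" by (simp flip: c add: mult.assoc)
    also have "\<dots> = scal c' * st a" using c' by (simp add: scal_commute)
    finally have "scal (c - c') * st a = 0" by (simp add: scal_diff algebra_simps)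
    then have "scal (1 / (c - c')) * (scal (c - c') * st a) = 0" by simp
    then show False using \<open>c' \<noteq> c\<close> \<open>st a \<noteq> 0\<close> by (simp add: scal_mult_assoc)
  qed
  have "scal (cnj c) = st (st a * a)" using c by (simp add: star_scal)
  also have "\<dots> = st a * a" by (simp only: star_mult star_star)
  also have "\<dots> = scal c" by (rule c)
  finally show "c \<in> \<real>" by (simp add: Reals_cnj_iff scal_inj)
  then have c_Re: "c = of_real (Re c)" by simp
  show "0 < Re c"
  proof (rule ccontr)
    assume "\<not> 0 < Re c"
    moreover have "c \<noteq> 0" using a c norm_star_mult_self[of a] by auto
    ultimately have neg: "Re c < 0" using c_Re by (auto simp: not_less order.order_iff_strict)
    define t where "t = 1 / sqrt (- Re c)"
    have "t * t * Re c = -1" unfolding t_def using neg by (simp add: field_simps)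
    then have "cnj (of_real t) * of_real t * c = - 1" by (subst c_Re) (simp flip: of_real_mult)
    then show False
      using star_mult_self_neq_minus_one[of "scal (of_real t) * a"]
        star_scal_mult_self[of "of_real t" a]
        c c' \<open>c' = c\<close> by (simp add: scal_mult[symmetric] scal_minus)
  qed
qed

lemma scalar_normal_imp_unitary_multiple:
  assumes a: "a \<noteq> 0" and c: "st a * a = scal c" and c': "a * st a = scal c'"
  obtains r w where "0 < r" and "unitary st w" and "a = scal (of_real (sqrt r)) * w"
    and "a * st a = scal (of_real r)"
proof -
  define r where "r = Re c"
  have "c' = c" "0 < r" and c_r: "c = of_real r"
    using scalar_normal_coeff[OF a c c'] unfolding r_def by simp_all
  define w where "w = scal (of_real (1 / sqrt r)) * a"
  have "cnj (of_real (1 / sqrt r)) * of_real (1 / sqrt r) * c = 1"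
    using \<open>0 < r\<close> unfolding c_r by (simp flip: of_real_mult)
  then have "unitary st w"
    unfolding unitary_def w_def star_scal_mult_self c c' \<open>c' = c\<close>
    by (simp add: scal_mult[symmetric])
  moreover have "a = scal (of_real (sqrt r)) * w"
    using \<open>0 < r\<close> unfolding w_def by (simp add: scal_mult_assoc flip: of_real_mult)
  moreover have "a * st a = scal (of_real r)" using c' \<open>c' = c\<close> c_r by simp
  ultimately show ?thesis using \<open>0 < r\<close> that by blast
qed

lemma twisted_fixedD:
  assumes "unitary st v" and "v * \<theta> b = b"
  shows "\<theta> b = st v * b"
proof -
  have "st v * b = (st v * v) * \<theta> b" using assms(2) by (simp add: mult.assoc)
  then show ?thesis using assms(1) unfolding unitary_def by simp
qed

lemma twisted_fixed_star_mult:
  assumes \<theta>: "is_aut sc st \<theta>" and ergodic: "{a. \<theta> a = a} = range (\<lambda>c. sc c 1)"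
    and v: "unitary st v" and a: "v * \<theta> a = a" and b: "v * \<theta> b = b"
  shows "\<exists>c. st a * b = scal c"
proof -
  have "\<theta> (st a * b) = st a * (v * st v) * b"
    using twisted_fixedD[where \<theta> = \<theta>, OF v a] twisted_fixedD[where \<theta> = \<theta>, OF v b]
    by (simp add: is_autD(4,5)[OF \<theta>] star_mult mult.assoc)
  then have "st a * b \<in> {a. \<theta> a = a}" using v unfolding unitary_def by simp
  then show ?thesis unfolding ergodic scal_def by blast
qed

lemma twisted_fixed_space_zero_or_line:
  assumes \<theta>: "is_aut sc st \<theta>" and ergodic: "{a. \<theta> a = a} = range (\<lambda>c. sc c 1)"
    and v: "unitary st v" and mult_star: "\<And>a. v * \<theta> a = a \<Longrightarrow> \<exists>c. a * st a = scal c"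
  shows "{a. v * \<theta> a = a} = {0} \<or> (\<exists>w. unitary st w \<and> {a. v * \<theta> a = a} = range (\<lambda>c. sc c w))"
proof -
  define W where "W = {a. v * \<theta> a = a}"
  have star_mult_W: "\<exists>c. st a * b = scal c" if "a \<in> W" "b \<in> W" for a b
    using twisted_fixed_star_mult[OF \<theta> ergodic v] that unfolding W_def by blast
  have scal_mult_W: "scal c * b \<in> W" if "b \<in> W" for b c
    using that unfolding W_def
    by (simp add: is_autD(4)[OF \<theta>] is_aut_scal[OF \<theta>] mult_scal_left_commute[of v])
  show ?thesis
  proof (cases "W = {0}")
    case True
    then show ?thesis unfolding W_def by simp
  next
    case False
    moreover have "0 \<in> W" unfolding W_def by (simp add: is_aut_zero[OF \<theta>])
    ultimately obtain a where aW: "a \<in> W" and "a \<noteq> 0" by blast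
    obtain c c' where "st a * a = scal c" "a * st a = scal c'"
      using star_mult_W[OF aW aW] mult_star aW unfolding W_def by blast
    then obtain r w where "0 < r" "unitary st w" and a: "a = scal (of_real (sqrt r)) * w"
      and r: "a * st a = scal (of_real r)"
      using scalar_normal_imp_unitary_multiple \<open>a \<noteq> 0\<close> by metis
    have "W = range (\<lambda>c. sc c w)"
    proof (intro equalityI subsetI)
      fix b assume "b \<in> W"
      obtain e where e: "st a * b = scal e" using star_mult_W[OF aW \<open>b \<in> W\<close>] by blast
      have "scal (of_real r) * b = scal (e * of_real (sqrt r)) * w"
        by (metis a e r mult.assoc scal_commute scal_mult_assoc)
      moreover have "b = scal (1 / of_real r) * (scal (of_real r) * b)"
        using \<open>0 < r\<close> by (simp add: scal_mult_assoc)
      ultimately have "b = scal (1 / of_real r * (e * of_real (sqrt r))) * w"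
        by (simp add: scal_mult_assoc)
      then show "b \<in> range (\<lambda>c. sc c w)" by (simp add: sc_eq_scal_mult)
    next
      fix b assume "b \<in> range (\<lambda>c. sc c w)"
      then obtain e where "b = scal e * w" by (auto simp: sc_eq_scal_mult)
      then have "b = scal (e / of_real (sqrt r)) * a"
        using \<open>0 < r\<close> unfolding a by (simp add: scal_mult_assoc)
      then show "b \<in> W" using scal_mult_W[OF aW] by simp
    qed
    then show ?thesis using \<open>unitary st w\<close> unfolding W_def by blast
  qed
qed

lemma cocycle_fixed_space_mult_star_scalar:
  assumes \<theta>: "is_aut sc st \<theta>" and \<alpha>: "is_aut sc st \<alpha>" and u: "unitary st u"
    and twist: "\<forall>a. u * \<alpha> (\<theta> a) = \<theta> (\<alpha> a) * u"
    and ergodic: "{a. \<theta> a = a} = range (\<lambda>c. sc c 1)"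
    and a: "apow \<alpha> (- n) (cocycle st \<alpha> u n) * \<theta> a = a"
  shows "\<exists>c. a * st a = scal c"
proof -
  let ?A = "apow \<alpha> n" and ?B = "apow \<alpha> (- n)" and ?U = "cocycle st \<alpha> u n"
  have A: "is_aut sc st ?A" and B: "is_aut sc st ?B" by (simp_all add: is_aut_apow[OF \<alpha>])
  have AB: "?A (?B y) = y" and BA: "?B (?A y) = y" for y
    using apow_apow_minus[OF is_autD(1)[OF \<alpha>]] by simp_all
  have U: "st ?U * ?U = 1" "?U * st ?U = 1"
    using unitary_cocycle[OF \<alpha> u] unfolding unitary_def by auto
  have "\<theta> a = st (?B ?U) * a"
    using twisted_fixedD[where \<theta> = \<theta>, OF unitary_is_aut[OF unitary_cocycle[OF \<alpha> u] B] a] .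
  then have "\<theta> (a * st a) = st (?B ?U) * (a * st a) * ?B ?U"
    by (simp add: is_autD(4,5)[OF \<theta>] star_mult mult.assoc)
  then have "?A (\<theta> (a * st a)) = st ?U * ?A (a * st a) * ?U"
    by (simp add: is_autD(4,5)[OF A] AB)
  then have "\<theta> (?A (a * st a)) = (?U * st ?U) * ?A (a * st a) * (?U * st ?U)"
    by (simp add: cocycle_conj[OF \<alpha> u twist] mult.assoc)
  then have "?A (a * st a) \<in> {a. \<theta> a = a}" using U by simp
  then obtain c where "?A (a * st a) = scal c" unfolding ergodic scal_def by blast
  then have "a * st a = scal c" using BA is_aut_scal[OF B] by metis
  then show ?thesis ..
qed

end

theorem mainTheorem7:
  fixes sc :: "complex \<Rightarrow> 'a::{real_normed_algebra_1,banach} \<Rightarrow> 'a"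
    and st :: "'a \<Rightarrow> 'a" and \<theta> \<alpha> :: "'a \<Rightarrow> 'a" and u :: 'a and n :: int
  assumes "cstar_algebra sc st"
    and "is_aut sc st \<theta>" and "is_aut sc st \<alpha>"
    and "unitary st u"
    and "\<forall>a. u * \<alpha> (\<theta> a) = \<theta> (\<alpha> a) * u"
    and "{a. \<theta> a = a} = range (\<lambda>c. sc c 1)"
  shows "{a. apow \<alpha> (- n) (cocycle st \<alpha> u n) * \<theta> a = a} = {0}
       \<or> (\<exists>w. unitary st w \<and>
            {a. apow \<alpha> (- n) (cocycle st \<alpha> u n) * \<theta> a = a} = range (\<lambda>c. sc c w))"
proof -
  interpret cstar sc st by (rule cstar_algebra_imp_cstar) fact
  have "unitary st (apow \<alpha> (- n) (cocycle st \<alpha> u n))"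
    by (rule unitary_is_aut[OF unitary_cocycle[OF assms(3,4)] is_aut_apow[OF assms(3)]])
  then show ?thesis
    by (rule twisted_fixed_space_zero_or_line[OF assms(2,6) _
        cocycle_fixed_space_mult_star_scalar[OF assms(2-6)]])
qed

end
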